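(* Let $(I,\preccurlyeq)$ be a directed set, let $S(\Lambda^{\preccurlyeq})$ be a direct spectrum over $(I,\preccurlyeq)$ with sets $\lambda_0(i)$, transports $\lambda^{\preccurlyeq}_{ij}$ and Bishop spaces $\mathcal F_i=(\lambda_0(i),F_i)$, let $S(M^{\preccurlyeq})$ be a direct spectrum over $(I,\preccurlyeq)$ with sets $\mu_0(i)$, transports $\mu^{\preccurlyeq}_{ij}$ and Bishop spaces $\mathcal G_i=(\mu_0(i),G_i)$, and let $\Psi:S(\Lambda^{\preccurlyeq})\Rightarrow S(M^{\preccurlyeq})$ be a direct spectrum-map. Then: (i) there is a unique function $\Psi_{\to}:\underset{\to}{\mathrm{Lim}}\,\lambda_0(i)\to\underset{\to}{\mathrm{Lim}}\,\mu_0(i)$ such that $\Psi_{\to}\circ\mathrm{eql}^{\Lambda^{\preccurlyeq}}_i=\mathrm{eql}^{M^{\preccurlyeq}}_i\circ\Psi_i$ for every $i\in I$; (ii) if $\Psi$ is continuous, then $\Psi_{\to}\in\mathrm{Mor}(\underset{\to}{\mathrm{Lim}}\,\mathcal F_i,\underset{\to}{\mathrm{Lim}}\,\mathcal G_i)$; (iii) if $\Psi_i$ is an embedding for every $i\in I$, then $\Psi_{\to}$ is an embedding.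
   Context: Work in Bishop-style constructive mathematics. Each set carries its own equality; functions respect equalities; $f$ is an embedding if $f(x)=f(x')$ implies $x=x'$. A directed set $(I,\preccurlyeq)$: a set with a reflexive transitive relation respecting equality, any two elements having a common upper bound. A direct family over $(I,\preccurlyeq)$: sets $\lambda_0(i)$ and functions $\lambda^{\preccurlyeq}_{ij}:\lambda_0(i)\to\lambda_0(j)$ for $i\preccurlyeq j$ with $\lambda^{\preccurlyeq}_{ii}=\mathrm{id}$ and $\lambda^{\preccurlyeq}_{ik}=\lambda^{\preccurlyeq}_{jk}\circ\lambda^{\preccurlyeq}_{ij}$. Bishop spaces: $\mathrm{Bic}(\mathbb R)$ = functions $\mathbb R\to\mathbb R$ uniformly continuous on each $[-n,n]$. A Bishop topology on $X$ is a set $F$ of functions $X\to\mathbb R$ containing constants, closed under addition, composition with $\mathrm{Bic}(\mathbb R)$, and uniform limits. $\bigvee F_0$ = least Bishop topology containing $F_0$. A Bishop morphism $(X,F)\to(Y,G)$ is a function $h$ with $g\circ h\in F$ for all $g\in G$; set $\mathrm{Mor}$. A direct spectrum: a direct family with Bishop topologies $F_i$ on $\lambda_0(i)$ such that each $\lambda^{\preccurlyeq}_{ij}\in\mathrm{Mor}(\mathcal F_i,\mathcal F_j)$. A direct spectrum-map $\Psi$ is a family of functions $\Psi_i:\lambda_0(i)\to\mu_0(i)$ with $\Psi_j\circ\lambda^{\preccurlyeq}_{ij}=\mu^{\preccurlyeq}_{ij}\circ\Psi_i$ for $i\preccurlyeq j$; it is continuous if each $\Psi_i\in\mathrm{Mor}(\mathcal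 F_i,\mathcal G_i)$. Direct limit: $\sum^{\preccurlyeq}\lambda_0(i)$ = pairs $(i,x)$, with $(i,x)=(j,y)$ iff there is $k\succcurlyeq i,j$ with $\lambda^{\preccurlyeq}_{ik}(x)=\lambda^{\preccurlyeq}_{jk}(y)$. $\prod^{\succcurlyeq}F_i$ = dependent assignments $\Theta$ with $\Theta_i\in F_i$ and $\Theta_i=\Theta_j\circ\lambda^{\preccurlyeq}_{ij}$ for $i\preccurlyeq j$. $\underset{\to}{\mathrm{Lim}}\,\lambda_0(i)$ has elements $\mathrm{eql}_0(i,x)$ with $\mathrm{eql}_0(i,x)=\mathrm{eql}_0(j,y)$ iff $(i,x)=(j,y)$ in $\sum^{\preccurlyeq}$; $\mathrm{eql}_0f_\Theta(\mathrm{eql}_0(i,x)):=\Theta_i(x)$; $\underset{\to}{\mathrm{Lim}}\,\mathcal F_i=(\underset{\to}{\mathrm{Lim}}\,\lambda_0(i),\bigvee\{\mathrm{eql}_0f_\Theta:\Theta\in\prod^{\succcurlyeq}F_i\})$; $\mathrm{eql}^{\Lambda^{\preccurlyeq}}_i(x)=\mathrm{eql}_0(i,x)$. The same constructions apply to $S(M^{\preccurlyeq})$. *)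

theory Defs
  imports "HOL-Analysis.Analysis"
begin

text \<open>Bishop-style sets are modelled as carrier sets with HOL equality; the direct limit
is modelled as the quotient of the disjoint union by its equality relation.
Real-valued functions on a carrier X are identified when they agree on X.\<close>

definition Bic :: "(real \<Rightarrow> real) set" where
  "Bic = {\<phi>. \<forall>n::nat. uniformly_continuous_on {- real n .. real n} \<phi>}"

definition bishop_topology :: "'a set \<Rightarrow> ('a \<Rightarrow> real) set \<Rightarrow> bool" where
  "bishop_topology X F \<longleftrightarrow>
     (\<forall>f g. f \<in> F \<longrightarrow> (\<forall>x\<in>X. g x = f x) \<longrightarrow> g \<in> F) \<and>
     (\<forall>c. (\<lambda>_. c) \<in> F) \<and>
     (\<forall>f\<in>F. \<forall>g\<in>F. (\<lambda>x. f x + g x) \<in> F) \<and>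
     (\<forall>f\<in>F. \<forall>\<phi>\<in>Bic. (\<phi> \<circ> f) \<in> F) \<and>
     (\<forall>f. (\<forall>\<epsilon>>0. \<exists>g\<in>F. \<forall>x\<in>X. \<bar>g x - f x\<bar> \<le> \<epsilon>) \<longrightarrow> f \<in> F)"

definition bigvee :: "'a set \<Rightarrow> ('a \<Rightarrow> real) set \<Rightarrow> ('a \<Rightarrow> real) set" where
  "bigvee X F0 = \<Inter>{F. bishop_topology X F \<and> F0 \<subseteq> F}"

definition Mor :: "'a set \<Rightarrow> ('a \<Rightarrow> real) set \<Rightarrow> 'b set \<Rightarrow> ('b \<Rightarrow> real) set \<Rightarrow> ('a \<Rightarrow> 'b) \<Rightarrow> bool" where
  "Mor X F Y G h \<longleftrightarrow> (\<forall>x\<in>X. h x \<in> Y) \<and> (\<forall>g\<in>G. g \<circ> h \<in> F)"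

definition directed_set :: "'i set \<Rightarrow> ('i \<Rightarrow> 'i \<Rightarrow> bool) \<Rightarrow> bool" where
  "directed_set I le \<longleftrightarrow>
     (\<forall>i\<in>I. le i i) \<and>
     (\<forall>i\<in>I. \<forall>j\<in>I. \<forall>k\<in>I. le i j \<longrightarrow> le j k \<longrightarrow> le i k) \<and>
     (\<forall>i\<in>I. \<forall>j\<in>I. \<exists>k\<in>I. le i k \<and> le j k)"

definition direct_family ::
  "'i set \<Rightarrow> ('i \<Rightarrow> 'i \<Rightarrow> bool) \<Rightarrow> ('i \<Rightarrow> 'a set) \<Rightarrow> ('i \<Rightarrow> 'i \<Rightarrow> 'a \<Rightarrow> 'a) \<Rightarrow> bool" where
  "direct_family I le A lam \<longleftrightarrow>
     (\<forall>i\<in>I. \<forall>j\<in>I. le i j \<longrightarrow> (\<forall>x\<in>A i. lam i j x \<in> A j)) \<and>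
     (\<forall>i\<in>I. \<forall>x\<in>A i. lam i i x = x) \<and>
     (\<forall>i\<in>I. \<forall>j\<in>I. \<forall>k\<in>I. le i j \<longrightarrow> le j k \<longrightarrow>
        (\<forall>x\<in>A i. lam i k x = lam j k (lam i j x)))"

definition direct_spectrum ::
  "'i set \<Rightarrow> ('i \<Rightarrow> 'i \<Rightarrow> bool) \<Rightarrow> ('i \<Rightarrow> 'a set) \<Rightarrow> ('i \<Rightarrow> 'i \<Rightarrow> 'a \<Rightarrow> 'a)
    \<Rightarrow> ('i \<Rightarrow> ('a \<Rightarrow> real) set) \<Rightarrow> bool" where
  "direct_spectrum I le A lam F \<longleftrightarrow>
     direct_family I le A lam \<and>
     (\<forall>i\<in>I. bishop_topology (A i) (F i)) \<and>
     (\<forall>i\<in>I. \<forall>j\<in>I. le i j \<longrightarrow> Mor (A i) (F i) (A j) (F j) (lam i j))"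

definition direct_spectrum_map ::
  "'i set \<Rightarrow> ('i \<Rightarrow> 'i \<Rightarrow> bool) \<Rightarrow> ('i \<Rightarrow> 'a set) \<Rightarrow> ('i \<Rightarrow> 'i \<Rightarrow> 'a \<Rightarrow> 'a)
    \<Rightarrow> ('i \<Rightarrow> 'b set) \<Rightarrow> ('i \<Rightarrow> 'i \<Rightarrow> 'b \<Rightarrow> 'b) \<Rightarrow> ('i \<Rightarrow> 'a \<Rightarrow> 'b) \<Rightarrow> bool" where
  "direct_spectrum_map I le A lam B mu Psi \<longleftrightarrow>
     (\<forall>i\<in>I. \<forall>x\<in>A i. Psi i x \<in> B i) \<and>
     (\<forall>i\<in>I. \<forall>j\<in>I. le i j \<longrightarrow> (\<forall>x\<in>A i. Psi j (lam i j x) = mu i j (Psi i x)))"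

definition continuous_spectrum_map ::
  "'i set \<Rightarrow> ('i \<Rightarrow> 'a set) \<Rightarrow> ('i \<Rightarrow> ('a \<Rightarrow> real) set)
    \<Rightarrow> ('i \<Rightarrow> 'b set) \<Rightarrow> ('i \<Rightarrow> ('b \<Rightarrow> real) set) \<Rightarrow> ('i \<Rightarrow> 'a \<Rightarrow> 'b) \<Rightarrow> bool" where
  "continuous_spectrum_map I A F B G Psi \<longleftrightarrow> (\<forall>i\<in>I. Mor (A i) (F i) (B i) (G i) (Psi i))"

definition dsum_eq ::
  "'i set \<Rightarrow> ('i \<Rightarrow> 'i \<Rightarrow> bool) \<Rightarrow> ('i \<Rightarrow> 'a set) \<Rightarrow> ('i \<Rightarrow> 'i \<Rightarrow> 'a \<Rightarrow> 'a) \<Rightarrow> (('i \<times> 'a) \<times> ('i \<times> 'a)) set" where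
  "dsum_eq I le A lam = {((i,x),(j,y)). i \<in> I \<and> x \<in> A i \<and> j \<in> I \<and> y \<in> A j \<and>
      (\<exists>k\<in>I. le i k \<and> le j k \<and> lam i k x = lam j k y)}"

definition dLim ::
  "'i set \<Rightarrow> ('i \<Rightarrow> 'i \<Rightarrow> bool) \<Rightarrow> ('i \<Rightarrow> 'a set) \<Rightarrow> ('i \<Rightarrow> 'i \<Rightarrow> 'a \<Rightarrow> 'a) \<Rightarrow> ('i \<times> 'a) set set" where
  "dLim I le A lam = (SIGMA i:I. A i) // dsum_eq I le A lam"

definition eql ::
  "'i set \<Rightarrow> ('i \<Rightarrow> 'i \<Rightarrow> bool) \<Rightarrow> ('i \<Rightarrow> 'a set) \<Rightarrow> ('i \<Rightarrow> 'i \<Rightarrow> 'a \<Rightarrow> 'a) \<Rightarrow> 'i \<Rightarrow> 'a \<Rightarrow> ('i \<times> 'a) set" where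
  "eql I le A lam i x = dsum_eq I le A lam `` {(i, x)}"

definition dprod ::
  "'i set \<Rightarrow> ('i \<Rightarrow> 'i \<Rightarrow> bool) \<Rightarrow> ('i \<Rightarrow> 'a set) \<Rightarrow> ('i \<Rightarrow> 'i \<Rightarrow> 'a \<Rightarrow> 'a)
     \<Rightarrow> ('i \<Rightarrow> ('a \<Rightarrow> real) set) \<Rightarrow> ('i \<Rightarrow> 'a \<Rightarrow> real) set" where
  "dprod I le A lam F = {\<Theta>. (\<forall>i\<in>I. \<Theta> i \<in> F i) \<and>
      (\<forall>i\<in>I. \<forall>j\<in>I. le i j \<longrightarrow> (\<forall>x\<in>A i. \<Theta> i x = \<Theta> j (lam i j x)))}"

definition eqlf :: "('i \<Rightarrow> 'a \<Rightarrow> real) \<Rightarrow> ('i \<times> 'a) set \<Rightarrow> real" where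
  "eqlf \<Theta> c = the_elem ((\<lambda>(i, x). \<Theta> i x) ` c)"

definition LimTop ::
  "'i set \<Rightarrow> ('i \<Rightarrow> 'i \<Rightarrow> bool) \<Rightarrow> ('i \<Rightarrow> 'a set) \<Rightarrow> ('i \<Rightarrow> 'i \<Rightarrow> 'a \<Rightarrow> 'a)
     \<Rightarrow> ('i \<Rightarrow> ('a \<Rightarrow> real) set) \<Rightarrow> (('i \<times> 'a) set \<Rightarrow> real) set" where
  "LimTop I le A lam F = bigvee (dLim I le A lam) (eqlf ` dprod I le A lam F)"

end

theory Submission
  imports Defs
begin

text \<open>A compatible family of maps out of the spectrum is constant on each equivalence class
of the direct sum, so it descends to the direct limit. Composing the coprojections
\<open>eql\<^sub>i\<close> of the target with \<open>\<Psi>\<^sub>i\<close> gives such a family, and its descent is \<open>\<Psi>\<^sub>\<rightarrow>\<close>;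
uniqueness holds because every element of the limit is some \<open>eql\<^sub>i x\<close>. For continuity
it suffices to check the generators \<open>eql\<^sub>0 f\<^sub>\<Theta>\<close> of the target topology, and
\<open>eql\<^sub>0 f\<^sub>\<Theta> \<circ> \<Psi>\<^sub>\<rightarrow>\<close> is the generator of the source topology induced by the
family \<open>\<Theta>\<^sub>i \<circ> \<Psi>\<^sub>i\<close>. Injectivity is read off the description of equality in the
direct sum.\<close>

definition cocone ::
  "'i set \<Rightarrow> ('i \<Rightarrow> 'i \<Rightarrow> bool) \<Rightarrow> ('i \<Rightarrow> 'a set) \<Rightarrow> ('i \<Rightarrow> 'i \<Rightarrow> 'a \<Rightarrow> 'a) \<Rightarrow> ('i \<Rightarrow> 'a \<Rightarrow> 'c) \<Rightarrow> bool"
  where "cocone I le A lam \<Phi> \<longleftrightarrow>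
    (\<forall>i\<in>I. \<forall>j\<in>I. le i j \<longrightarrow> (\<forall>x\<in>A i. \<Phi> i x = \<Phi> j (lam i j x)))"

text \<open>Only meaningful for cocones \<open>\<Phi>\<close>, on whose classes \<open>\<Phi>\<close> is constant;
otherwise \<open>the_elem\<close> returns an unspecified value.\<close>
definition dLim_lift :: "('i \<Rightarrow> 'a \<Rightarrow> 'c) \<Rightarrow> ('i \<times> 'a) set \<Rightarrow> 'c"
  where "dLim_lift \<Phi> c = the_elem ((\<lambda>(i, x). \<Phi> i x) ` c)"

definition dLim_map ::
  "'i set \<Rightarrow> ('i \<Rightarrow> 'i \<Rightarrow> bool) \<Rightarrow> ('i \<Rightarrow> 'b set) \<Rightarrow> ('i \<Rightarrow> 'i \<Rightarrow> 'b \<Rightarrow> 'b) \<Rightarrow> ('i \<Rightarrow> 'a \<Rightarrow> 'b)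
    \<Rightarrow> ('i \<times> 'a) set \<Rightarrow> ('i \<times> 'b) set"
  where "dLim_map I le B mu Psi = dLim_lift (\<lambda>i x. eql I le B mu i (Psi i x))"

lemma eqlf_eq_dLim_lift: "eqlf = dLim_lift"
  by (simp add: fun_eq_iff eqlf_def dLim_lift_def)

lemma dprod_iff: "\<Theta> \<in> dprod I le A lam F \<longleftrightarrow> (\<forall>i\<in>I. \<Theta> i \<in> F i) \<and> cocone I le A lam \<Theta>"
  by (simp add: dprod_def cocone_def)

lemma dsum_eq_equiv:
  assumes D: "directed_set I le" and Fam: "direct_family I le A lam"
  shows "equiv (SIGMA i:I. A i) (dsum_eq I le A lam)"
proof (rule equivI)
  show "dsum_eq I le A lam \<subseteq> (SIGMA i:I. A i) \<times> (SIGMA i:I. A i)"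
    by (auto simp: dsum_eq_def)
  have "\<forall>i\<in>I. le i i" using D by (simp add: directed_set_def)
  then show "refl_on (SIGMA i:I. A i) (dsum_eq I le A lam)"
    by (auto simp: refl_on_def dsum_eq_def)
  show "sym (dsum_eq I le A lam)"
    by (auto simp: sym_def dsum_eq_def)
  show "trans (dsum_eq I le A lam)"
  proof (rule transI, clarify)
    fix i x j y l z
    assume "((i, x), (j, y)) \<in> dsum_eq I le A lam" "((j, y), (l, z)) \<in> dsum_eq I le A lam"
    then obtain k1 k2 where ij: "i \<in> I" "x \<in> A i" "j \<in> I" "y \<in> A j" "k1 \<in> I" "le i k1" "le j k1"
        "lam i k1 x = lam j k1 y"
      and jl: "l \<in> I" "z \<in> A l" "k2 \<in> I" "le j k2" "le l k2" "lam j k2 y = lam l k2 z"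
      by (auto simp: dsum_eq_def)
    from D ij jl obtain k where k: "k \<in> I" "le k1 k" "le k2 k"
      unfolding directed_set_def by blast
    have trans_le: "\<And>a b c. a \<in> I \<Longrightarrow> b \<in> I \<Longrightarrow> c \<in> I \<Longrightarrow> le a b \<Longrightarrow> le b c \<Longrightarrow> le a c"
      using D unfolding directed_set_def by blast
    have comp: "\<And>a b c w. a \<in> I \<Longrightarrow> b \<in> I \<Longrightarrow> c \<in> I \<Longrightarrow> le a b \<Longrightarrow> le b c \<Longrightarrow> w \<in> A a \<Longrightarrow>
        lam a c w = lam b c (lam a b w)"
      using Fam unfolding direct_family_def by blast
    have "lam i k x = lam k1 k (lam j k1 y)" using comp[of i k1 k x] ij k by simp
    also have "\<dots> = lam k2 k (lam j k2 y)" using comp[of j k1 k y] comp[of j k2 k y] ij jl k by simp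
    also have "\<dots> = lam l k z" using comp[of l k2 k z] jl k by simp
    finally have "lam i k x = lam l k z" .
    moreover have "le i k" "le l k" using trans_le ij jl k by blast+
    ultimately show "((i, x), (l, z)) \<in> dsum_eq I le A lam"
      using ij jl k by (auto simp: dsum_eq_def)
  qed
qed

lemma eql_eq_iff:
  assumes "directed_set I le" "direct_family I le A lam"
    and "i \<in> I" "x \<in> A i" "j \<in> I" "y \<in> A j"
  shows "eql I le A lam i x = eql I le A lam j y \<longleftrightarrow> ((i, x), (j, y)) \<in> dsum_eq I le A lam"
  unfolding eql_def using equiv_class_eq_iff[OF dsum_eq_equiv[OF assms(1,2)]] assms by auto

lemma eql_in_dLim: "i \<in> I \<Longrightarrow> x \<in> A i \<Longrightarrow> eql I le A lam i x \<in> dLim I le A lam"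
  unfolding dLim_def eql_def by (rule quotientI) auto

lemma dLim_eqlE:
  assumes "c \<in> dLim I le A lam"
  obtains i x where "i \<in> I" "x \<in> A i" "c = eql I le A lam i x"
  using assms unfolding dLim_def eql_def quotient_def by auto

lemma cocone_eql:
  assumes D: "directed_set I le" and Fam: "direct_family I le A lam"
  shows "cocone I le A lam (eql I le A lam)"
  unfolding cocone_def
proof (intro ballI impI)
  fix i j x assume ij: "i \<in> I" "j \<in> I" "le i j" and x: "x \<in> A i"
  have "lam i j x \<in> A j" "lam j j (lam i j x) = lam i j x" "le j j"
    using Fam D ij x unfolding direct_family_def directed_set_def by blast+
  then show "eql I le A lam i x = eql I le A lam j (lam i j x)"
    using eql_eq_iff[OF D Fam] ij x by (force simp: dsum_eq_def)
qed

lemma dLim_lift_eql: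
  assumes D: "directed_set I le" and Fam: "direct_family I le A lam"
    and \<Phi>: "cocone I le A lam \<Phi>" and i: "i \<in> I" "x \<in> A i"
  shows "dLim_lift \<Phi> (eql I le A lam i x) = \<Phi> i x"
proof -
  have "(\<lambda>(j, y). \<Phi> j y) ` eql I le A lam i x = {\<Phi> i x}"
  proof (intro equalityI subsetI)
    fix v assume "v \<in> (\<lambda>(j, y). \<Phi> j y) ` eql I le A lam i x"
    then obtain j y k where v: "v = \<Phi> j y" and jk: "j \<in> I" "y \<in> A j" "k \<in> I" "le i k" "le j k"
        "lam i k x = lam j k y"
      by (auto simp: eql_def dsum_eq_def)
    have "\<Phi> i x = \<Phi> k (lam i k x)" "\<Phi> j y = \<Phi> k (lam j k y)"
      using \<Phi> i jk unfolding cocone_def by blast+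
    with jk v show "v \<in> {\<Phi> i x}" by simp
  next
    fix v assume "v \<in> {\<Phi> i x}"
    moreover have "(i, x) \<in> eql I le A lam i x"
      using dsum_eq_equiv[OF D Fam] i unfolding eql_def equiv_def refl_on_def by auto
    ultimately show "v \<in> (\<lambda>(j, y). \<Phi> j y) ` eql I le A lam i x" by force
  qed
  then show ?thesis by (simp add: dLim_lift_def)
qed

lemma cocone_comp_spectrum_map:
  assumes "cocone I le B mu \<Phi>" "direct_spectrum_map I le A lam B mu Psi"
  shows "cocone I le A lam (\<lambda>i x. \<Phi> i (Psi i x))"
  using assms by (simp add: cocone_def direct_spectrum_map_def)

lemma dLim_map_eql:
  assumes D: "directed_set I le" "direct_family I le A lam" "direct_family I le B mu"
    and Psi: "direct_spectrum_map I le A lam B mu Psi" and i: "i \<in> I" "x \<in> A i"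
  shows "dLim_map I le B mu Psi (eql I le A lam i x) = eql I le B mu i (Psi i x)"
  unfolding dLim_map_def
  by (rule dLim_lift_eql[OF D(1,2) cocone_comp_spectrum_map[OF cocone_eql[OF D(1,3)] Psi] i])

lemma dLim_map_in_dLim:
  assumes "directed_set I le" "direct_family I le A lam" "direct_family I le B mu"
    and Psi: "direct_spectrum_map I le A lam B mu Psi" and c: "c \<in> dLim I le A lam"
  shows "dLim_map I le B mu Psi c \<in> dLim I le B mu"
proof -
  obtain i x where "i \<in> I" "x \<in> A i" "c = eql I le A lam i x" using c by (rule dLim_eqlE)
  moreover have "Psi i x \<in> B i" using Psi \<open>i \<in> I\<close> \<open>x \<in> A i\<close> by (simp add: direct_spectrum_map_def)
  ultimately show ?thesis using dLim_map_eql[OF assms(1-4)] eql_in_dLim by metis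
qed

lemma dLim_lift_dLim_map:
  assumes D: "directed_set I le" "direct_family I le A lam" "direct_family I le B mu"
    and Psi: "direct_spectrum_map I le A lam B mu Psi" and \<Phi>: "cocone I le B mu \<Phi>"
    and c: "c \<in> dLim I le A lam"
  shows "dLim_lift \<Phi> (dLim_map I le B mu Psi c) = dLim_lift (\<lambda>i x. \<Phi> i (Psi i x)) c"
proof -
  obtain i x where i: "i \<in> I" "x \<in> A i" and "c = eql I le A lam i x" using c by (rule dLim_eqlE)
  moreover have "Psi i x \<in> B i" using Psi i by (simp add: direct_spectrum_map_def)
  ultimately show ?thesis
    using dLim_map_eql[OF D Psi i] dLim_lift_eql[OF D(1,3) \<Phi>]
      dLim_lift_eql[OF D(1,2) cocone_comp_spectrum_map[OF \<Phi> Psi] i] by simp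
qed

lemma inj_on_dLim_map:
  assumes D: "directed_set I le" "direct_family I le A lam" "direct_family I le B mu"
    and Psi: "direct_spectrum_map I le A lam B mu Psi" and inj: "\<forall>i\<in>I. inj_on (Psi i) (A i)"
  shows "inj_on (dLim_map I le B mu Psi) (dLim I le A lam)"
proof (rule inj_onI)
  fix c d assume c: "c \<in> dLim I le A lam" and d: "d \<in> dLim I le A lam"
    and eq: "dLim_map I le B mu Psi c = dLim_map I le B mu Psi d"
  obtain i x where i: "i \<in> I" "x \<in> A i" and c_eq: "c = eql I le A lam i x" using c by (rule dLim_eqlE)
  obtain j y where j: "j \<in> I" "y \<in> A j" and d_eq: "d = eql I le A lam j y" using d by (rule dLim_eqlE)
  have Psi_in: "Psi i x \<in> B i" "Psi j y \<in> B j"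
    using Psi i j by (simp_all add: direct_spectrum_map_def)
  have "eql I le B mu i (Psi i x) = eql I le B mu j (Psi j y)"
    using eq dLim_map_eql[OF D Psi] i j c_eq d_eq by simp
  then obtain k where k: "k \<in> I" "le i k" "le j k" "mu i k (Psi i x) = mu j k (Psi j y)"
    using eql_eq_iff[OF D(1,3)] i j Psi_in by (auto simp: dsum_eq_def)
  then have "Psi k (lam i k x) = Psi k (lam j k y)"
    using Psi i j by (simp add: direct_spectrum_map_def)
  moreover have "lam i k x \<in> A k" "lam j k y \<in> A k"
    using D(2) i j k by (simp_all add: direct_family_def)
  ultimately have "lam i k x = lam j k y"
    using inj k(1) by (meson inj_onD)
  then show "c = d"
    using eql_eq_iff[OF D(1,2)] i j k c_eq d_eq by (auto simp: dsum_eq_def)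
qed

lemma bishop_topologyI:
  assumes "\<And>f g. f \<in> F \<Longrightarrow> \<forall>x\<in>X. g x = f x \<Longrightarrow> g \<in> F"
    and "\<And>c. (\<lambda>_. c) \<in> F"
    and "\<And>f g. f \<in> F \<Longrightarrow> g \<in> F \<Longrightarrow> (\<lambda>x. f x + g x) \<in> F"
    and "\<And>f \<phi>. f \<in> F \<Longrightarrow> \<phi> \<in> Bic \<Longrightarrow> \<phi> \<circ> f \<in> F"
    and "\<And>f. \<forall>\<epsilon>>0. \<exists>g\<in>F. \<forall>x\<in>X. \<bar>g x - f x\<bar> \<le> \<epsilon> \<Longrightarrow> f \<in> F"
  shows "bishop_topology X F"
  unfolding bishop_topology_def using assms by blast

lemma
  assumes "bishop_topology X F"
  shows bishop_topology_ext: "f \<in> F \<Longrightarrow> \<forall>x\<in>X. g x = f x \<Longrightarrow> g \<in> F"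
    and bishop_topology_const: "(\<lambda>_. c) \<in> F"
    and bishop_topology_add: "f \<in> F \<Longrightarrow> g \<in> F \<Longrightarrow> (\<lambda>x. f x + g x) \<in> F"
    and bishop_topology_comp: "f \<in> F \<Longrightarrow> \<phi> \<in> Bic \<Longrightarrow> \<phi> \<circ> f \<in> F"
    and bishop_topology_uniform_limit: "\<forall>\<epsilon>>0. \<exists>g\<in>F. \<forall>x\<in>X. \<bar>g x - f x\<bar> \<le> \<epsilon> \<Longrightarrow> f \<in> F"
  using assms unfolding bishop_topology_def by blast+

lemma bishop_topology_Inter:
  assumes BT: "\<And>F. F \<in> \<F> \<Longrightarrow> bishop_topology X F"
  shows "bishop_topology X (\<Inter>\<F>)"
proof (rule bishop_topologyI)
  fix f g assume "f \<in> \<Inter>\<F>" "\<forall>x\<in>X. g x = f x"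
  then show "g \<in> \<Inter>\<F>" using bishop_topology_ext[OF BT] by blast
next
  show "(\<lambda>_. c) \<in> \<Inter>\<F>" for c using bishop_topology_const[OF BT] by blast
next
  fix f g assume "f \<in> \<Inter>\<F>" "g \<in> \<Inter>\<F>"
  then show "(\<lambda>x. f x + g x) \<in> \<Inter>\<F>" using bishop_topology_add[OF BT] by blast
next
  fix f \<phi> assume "f \<in> \<Inter>\<F>" "\<phi> \<in> Bic"
  then show "\<phi> \<circ> f \<in> \<Inter>\<F>" using bishop_topology_comp[OF BT] by blast
next
  fix f assume lim: "\<forall>\<epsilon>>0. \<exists>g\<in>\<Inter>\<F>. \<forall>x\<in>X. \<bar>g x - f x\<bar> \<le> \<epsilon>"
  show "f \<in> \<Inter>\<F>"
  proof
    fix F assume "F \<in> \<F>"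
    with lim have "\<forall>\<epsilon>>0. \<exists>g\<in>F. \<forall>x\<in>X. \<bar>g x - f x\<bar> \<le> \<epsilon>" by blast
    then show "f \<in> F" by (rule bishop_topology_uniform_limit[OF BT[OF \<open>F \<in> \<F>\<close>]])
  qed
qed

lemma bishop_topology_bigvee: "bishop_topology X (bigvee X F0)"
  unfolding bigvee_def by (rule bishop_topology_Inter) blast

lemma bigvee_upper: "F0 \<subseteq> bigvee X F0"
  unfolding bigvee_def by blast

lemma bigvee_least: "bishop_topology X H \<Longrightarrow> F0 \<subseteq> H \<Longrightarrow> bigvee X F0 \<subseteq> H"
  unfolding bigvee_def by blast

lemma bishop_topology_pullback:
  assumes F: "bishop_topology X F" and f: "\<forall>x\<in>X. f x \<in> Y"
  shows "bishop_topology Y {g. g \<circ> f \<in> F}"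
proof (rule bishop_topologyI, unfold mem_Collect_eq)
  fix g h assume g: "g \<circ> f \<in> F" and h: "\<forall>y\<in>Y. h y = g y"
  have "\<forall>x\<in>X. (h \<circ> f) x = (g \<circ> f) x" using f h by simp
  then show "h \<circ> f \<in> F" by (rule bishop_topology_ext[OF F g])
next
  show "(\<lambda>_. c) \<circ> f \<in> F" for c
    using bishop_topology_const[OF F] by (simp add: comp_def)
next
  fix g h assume "g \<circ> f \<in> F" "h \<circ> f \<in> F"
  then show "(\<lambda>x. g x + h x) \<circ> f \<in> F"
    using bishop_topology_add[OF F] by (simp add: comp_def)
next
  fix g \<phi> assume "g \<circ> f \<in> F" "\<phi> \<in> Bic"
  then show "\<phi> \<circ> g \<circ> f \<in> F"
    using bishop_topology_comp[OF F] by (simp add: comp_assoc)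
next
  fix h assume lim: "\<forall>\<epsilon>>0. \<exists>g\<in>{g. g \<circ> f \<in> F}. \<forall>y\<in>Y. \<bar>g y - h y\<bar> \<le> \<epsilon>"
  have "\<forall>\<epsilon>>0. \<exists>g'\<in>F. \<forall>x\<in>X. \<bar>g' x - (h \<circ> f) x\<bar> \<le> \<epsilon>"
  proof (intro allI impI)
    fix \<epsilon> :: real assume "\<epsilon> > 0"
    then obtain g where "g \<circ> f \<in> F" "\<forall>y\<in>Y. \<bar>g y - h y\<bar> \<le> \<epsilon>" using lim by blast
    with f show "\<exists>g'\<in>F. \<forall>x\<in>X. \<bar>g' x - (h \<circ> f) x\<bar> \<le> \<epsilon>" by (intro bexI[of _ "g \<circ> f"]) auto
  qed
  then show "h \<circ> f \<in> F" by (rule bishop_topology_uniform_limit[OF F])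
qed

lemma Mor_bigveeI:
  assumes "bishop_topology X F" and "\<forall>x\<in>X. f x \<in> Y" and "\<forall>g\<in>G0. g \<circ> f \<in> F"
  shows "Mor X F Y (bigvee Y G0) f"
proof -
  have "bigvee Y G0 \<subseteq> {g. g \<circ> f \<in> F}"
    using assms by (intro bigvee_least bishop_topology_pullback) auto
  with assms(2) show ?thesis by (auto simp: Mor_def)
qed

lemma Mor_dLim_map:
  assumes D: "directed_set I le" "direct_family I le A lam" "direct_family I le B mu"
    and Psi: "direct_spectrum_map I le A lam B mu Psi"
    and cont: "continuous_spectrum_map I A F B G Psi"
  shows "Mor (dLim I le A lam) (LimTop I le A lam F) (dLim I le B mu) (LimTop I le B mu G)
           (dLim_map I le B mu Psi)"
  unfolding LimTop_def[of I le B]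
proof (rule Mor_bigveeI)
  show "bishop_topology (dLim I le A lam) (LimTop I le A lam F)"
    unfolding LimTop_def by (rule bishop_topology_bigvee)
  show "\<forall>c\<in>dLim I le A lam. dLim_map I le B mu Psi c \<in> dLim I le B mu"
    using dLim_map_in_dLim[OF D Psi] by blast
  show "\<forall>t\<in>eqlf ` dprod I le B mu G. t \<circ> dLim_map I le B mu Psi \<in> LimTop I le A lam F"
  proof
    fix t assume "t \<in> eqlf ` dprod I le B mu G"
    then obtain \<Theta> where \<Theta>: "\<forall>i\<in>I. \<Theta> i \<in> G i" "cocone I le B mu \<Theta>" and t: "t = dLim_lift \<Theta>"
      by (auto simp: dprod_iff eqlf_eq_dLim_lift)
    let ?\<Theta>' = "\<lambda>i x. \<Theta> i (Psi i x)"
    have "?\<Theta>' \<in> dprod I le A lam F"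
      using \<Theta> cont cocone_comp_spectrum_map[OF \<Theta>(2) Psi]
      by (auto simp: dprod_iff continuous_spectrum_map_def Mor_def comp_def)
    then have "dLim_lift ?\<Theta>' \<in> LimTop I le A lam F"
      using bigvee_upper by (fastforce simp: LimTop_def eqlf_eq_dLim_lift)
    moreover have "\<forall>c\<in>dLim I le A lam. (t \<circ> dLim_map I le B mu Psi) c = dLim_lift ?\<Theta>' c"
      using dLim_lift_dLim_map[OF D Psi \<Theta>(2)] t by simp
    ultimately show "t \<circ> dLim_map I le B mu Psi \<in> LimTop I le A lam F"
      by (rule bishop_topology_ext[OF \<open>bishop_topology _ (LimTop I le A lam F)\<close>])
  qed
qed

theorem theorem9p8:
  fixes I :: "'i set" and le :: "'i \<Rightarrow> 'i \<Rightarrow> bool"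
    and A :: "'i \<Rightarrow> 'a set" and lam :: "'i \<Rightarrow> 'i \<Rightarrow> 'a \<Rightarrow> 'a" and F :: "'i \<Rightarrow> ('a \<Rightarrow> real) set"
    and B :: "'i \<Rightarrow> 'b set" and mu :: "'i \<Rightarrow> 'i \<Rightarrow> 'b \<Rightarrow> 'b" and G :: "'i \<Rightarrow> ('b \<Rightarrow> real) set"
    and Psi :: "'i \<Rightarrow> 'a \<Rightarrow> 'b"
  assumes "directed_set I le"
    and "direct_spectrum I le A lam F"
    and "direct_spectrum I le B mu G"
    and "direct_spectrum_map I le A lam B mu Psi"
  shows "\<exists>f. (\<forall>c\<in>dLim I le A lam. f c \<in> dLim I le B mu)
           \<and> (\<forall>i\<in>I. \<forall>x\<in>A i. f (eql I le A lam i x) = eql I le B mu i (Psi i x))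
           \<and> (\<forall>g. (\<forall>c\<in>dLim I le A lam. g c \<in> dLim I le B mu)
                  \<and> (\<forall>i\<in>I. \<forall>x\<in>A i. g (eql I le A lam i x) = eql I le B mu i (Psi i x))
                  \<longrightarrow> (\<forall>c\<in>dLim I le A lam. g c = f c))
           \<and> (continuous_spectrum_map I A F B G Psi \<longrightarrow>
                Mor (dLim I le A lam) (LimTop I le A lam F) (dLim I le B mu) (LimTop I le B mu G) f)
           \<and> ((\<forall>i\<in>I. inj_on (Psi i) (A i)) \<longrightarrow> inj_on f (dLim I le A lam))"
proof -
  have D: "directed_set I le" "direct_family I le A lam" "direct_family I le B mu"
    using assms(1-3) by (simp_all add: direct_spectrum_def)
  note Psi = assms(4)
  let ?f = "dLim_map I le B mu Psi"
  have unique: "g c = ?f c"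
    if "\<forall>i\<in>I. \<forall>x\<in>A i. g (eql I le A lam i x) = eql I le B mu i (Psi i x)"
      and "c \<in> dLim I le A lam" for g c
    using that(2) by (rule dLim_eqlE) (simp add: that(1) dLim_map_eql[OF D Psi])
  show ?thesis
  proof (rule exI[of _ ?f], intro conjI)
  qed (use dLim_map_in_dLim[OF D Psi] in blast, use dLim_map_eql[OF D Psi] in blast,
      use unique in blast, use Mor_dLim_map[OF D Psi] in blast,
      use inj_on_dLim_map[OF D Psi] in blast)
qed

end
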